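(* Let $R,K$ be positive integers, $m=RK$, $p\in[0,1]$. In a serial-star network with $R$ branches of $K$ sensors, let $\mathcal{T}$ be the random set of measurements reaching the fusion center. Write $$h(x)=\left[\frac{1-p+p^{K+1}x^K(1-x)}{1-px}\right]^R=\sum_{i=0}^m d_i x^i$$ (a polynomial in $x$). Then $\mathbb{P}\{|\mathcal{T}|=i\}=d_i$ for every $i=0,1,\ldots,m$.
   Context: Serial-star network: in each of the $R$ branches, sensor $j$ ($j=1,\ldots,K$) forwards all measurements it holds (its own plus those received from sensor $j-1$) to sensor $j+1$, and sensor $K$ forwards to the fusion center. Each of the $RK$ links is an independent Bernoulli erasure channel that delivers the transmitted data with probability $p$ and loses it otherwise; hence the measurement of sensor $j$ in a branch reaches the fusion center iff all $K-j+1$ links from sensor $j$ to the fusion center succeed. *)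

theory Defs
  imports "HOL-Probability.Probability" "HOL-Computational_Algebra.Polynomial"
begin

text \<open>Links of the serial-star network: link (r,j), r in 1..R, j in 1..K, is the
link leaving sensor j of branch r (towards sensor j+1, or the fusion center if j = K).
An outcome w assigns True (delivered) / False (lost) to every link.\<close>
definition ss_links :: "nat \<Rightarrow> nat \<Rightarrow> (nat \<times> nat) set" where
  "ss_links R K = {1..R} \<times> {1..K}"

text \<open>Random set of measurements (identified with sensors (r,j)) reaching the fusion
center: sensor j's measurement arrives iff links j, ..., K of its branch all succeed.\<close>
definition ss_received :: "nat \<Rightarrow> nat \<Rightarrow> (nat \<times> nat \<Rightarrow> bool) \<Rightarrow> (nat \<times> nat) set" where
  "ss_received R K w = {(r, j) \<in> ss_links R K. \<forall>l\<in>{j..K}. w (r, l)}"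

definition ss_channel :: "nat \<Rightarrow> nat \<Rightarrow> real \<Rightarrow> (nat \<times> nat \<Rightarrow> bool) pmf" where
  "ss_channel R K p = Pi_pmf (ss_links R K) False (\<lambda>_. bernoulli_pmf p)"

text \<open>The polynomial h(x) = [(1 - p + p^(K+1) x^K (1 - x)) / (1 - p x)]^R; the division
is exact, so h is the quotient of numerator^R by (1 - p x)^R.\<close>
definition ss_h :: "nat \<Rightarrow> nat \<Rightarrow> real \<Rightarrow> real poly" where
  "ss_h R K p = ([:1 - p:] + smult (p ^ (K + 1)) (monom 1 K * [:1, -1:])) ^ R
                 div [:1, -p:] ^ R"

end

theory Submission
  imports Defs
begin

text \<open>The measurements of a branch that reach the fusion center are those of the sensors
after its last lost link, so their number is a truncated geometric variable with generating
polynomial g(x) = \<Sum>t<K. (1 - p) p^t x^t + p^K x^K, and g(x) (1 - p x) is the numerator of h.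
Different branches use disjoint links, so |T| is a sum of R independent copies of this
variable and has generating polynomial g^R = h.\<close>

lemma pmf_map_add_pair_pmf:
  assumes "pmf P = coeff f" and "pmf Q = coeff g"
  shows "pmf (map_pmf (\<lambda>(a, b). a + b) (pair_pmf P Q)) = coeff (f * g)"
proof
  fix n :: nat
  have "(\<lambda>(a, b). a + b) -` {n} = (\<lambda>i. (i, n - i)) ` {..n}" by force
  then have "pmf (map_pmf (\<lambda>(a, b). a + b) (pair_pmf P Q)) n
               = sum (pmf (pair_pmf P Q)) ((\<lambda>i. (i, n - i)) ` {..n})"
    by (simp add: pmf_map measure_measure_pmf_finite)
  also have "\<dots> = (\<Sum>i\<le>n. pmf P i * pmf Q (n - i))"
    by (subst sum.reindex) (auto simp: inj_on_def pmf_pair)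
  finally show "pmf (map_pmf (\<lambda>(a, b). a + b) (pair_pmf P Q)) n = coeff (f * g) n"
    by (simp add: assms coeff_mult)
qed

lemma pmf_map_Suc_if_bernoulli:
  assumes "pmf D = coeff g" and "0 \<le> p" and "p \<le> 1"
  shows "pmf (map_pmf (\<lambda>(b, n). if b then Suc n else 0) (pair_pmf (bernoulli_pmf p) D))
           = coeff ([:1 - p:] + smult p (pCons 0 g))"
proof
  fix n :: nat
  show "pmf (map_pmf (\<lambda>(b, n). if b then Suc n else 0) (pair_pmf (bernoulli_pmf p) D)) n
          = coeff ([:1 - p:] + smult p (pCons 0 g)) n"
  proof (cases n)
    case 0
    have "(\<lambda>(b, n). if b then Suc n else 0) -` {0} = {False} \<times> UNIV" by auto
    then show ?thesis
      using 0 assms by (simp add: pmf_map measure_pmf_prob_product measure_pmf_single)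
  next
    case (Suc k)
    have "(\<lambda>(b, n). if b then Suc n else 0) -` {Suc k} = {True} \<times> {k}"
      by (auto split: if_splits)
    then show ?thesis
      using Suc assms by (simp add: pmf_map measure_pmf_single pmf_pair)
  qed
qed

lemma map_row_Pi_pmf:
  assumes "finite J"
  shows "map_pmf (\<lambda>w j. w (i, j)) (Pi_pmf ({i} \<times> J) dflt (\<lambda>_. q)) = Pi_pmf J dflt (\<lambda>_. q)"
proof -
  have "Pi_pmf J dflt (\<lambda>_. q) = map_pmf (\<lambda>w. w \<circ> Pair i) (Pi_pmf ({i} \<times> J) dflt (\<lambda>_. q))"
    by (rule Pi_pmf_bij_betw) (auto simp: bij_betw_def inj_on_def assms)
  then show ?thesis by (simp add: comp_def)
qed

lemma pmf_sum_rows_Pi_pmf: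
  fixes F :: "('b \<Rightarrow> 'c) \<Rightarrow> nat"
  assumes "finite I" and "finite J" and "pmf (map_pmf F (Pi_pmf J dflt (\<lambda>_. q))) = coeff g"
  shows "pmf (map_pmf (\<lambda>w. \<Sum>i\<in>I. F (\<lambda>j. w (i, j))) (Pi_pmf (I \<times> J) dflt (\<lambda>_. q)))
           = coeff (g ^ card I)"
  using assms(1)
proof (induction rule: finite_induct)
  case empty
  show ?case by (auto simp: pmf_return coeff_1 fun_eq_iff)
next
  case (insert i I)
  let ?row = "\<lambda>w. F (\<lambda>j. w (i, j))"
  let ?rows = "\<lambda>w. \<Sum>i\<in>I. F (\<lambda>j. w (i, j))"
  let ?P = "Pi_pmf ({i} \<times> J) dflt (\<lambda>_. q)" and ?Q = "Pi_pmf (I \<times> J) dflt (\<lambda>_. q)"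
  let ?merge = "\<lambda>v w x. if x \<in> {i} \<times> J then v x else w x"
  have merge_rows: "?row (?merge v w) + ?rows (?merge v w) = ?row v + ?rows w"
    if "v \<in> set_pmf ?P" and "w \<in> set_pmf ?Q" for v w
  proof -
    have "(\<lambda>j. ?merge v w (i, j)) = (\<lambda>j. v (i, j))"
      \<comment> \<open>off their index sets both v and w take the default value\<close>
      using that set_Pi_pmf_subset[of "{i} \<times> J" dflt] set_Pi_pmf_subset[of "I \<times> J" dflt]
        insert.hyps assms(2) by fastforce
    moreover have "?rows (?merge v w) = ?rows w"
      using insert.hyps by (intro sum.cong refl arg_cong[where f = F] ext) auto
    ultimately show ?thesis by simp
  qed
  have row: "pmf (map_pmf ?row ?P) = coeff g"
  proof -
    have "map_pmf ?row ?P = map_pmf F (map_pmf (\<lambda>w j. w (i, j)) ?P)"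
      by (simp add: pmf.map_comp comp_def)
    then show ?thesis
      using assms(2,3) by (simp add: map_row_Pi_pmf)
  qed
  have insert_times: "insert i I \<times> J = {i} \<times> J \<union> I \<times> J" by auto
  have "map_pmf (\<lambda>w. ?row w + ?rows w) (Pi_pmf (insert i I \<times> J) dflt (\<lambda>_. q))
      = map_pmf (\<lambda>(v, w). ?row v + ?rows w) (pair_pmf ?P ?Q)"
    unfolding insert_times using insert.hyps assms(2) merge_rows
    by (subst Pi_pmf_union) (auto simp: pmf.map_comp intro!: map_pmf_cong)
  also have "\<dots> = map_pmf (\<lambda>(a, b). a + b) (pair_pmf (map_pmf ?row ?P) (map_pmf ?rows ?Q))"
    by (simp add: map_pair[symmetric] pmf.map_comp case_prod_unfold comp_def)
  finally show ?case
    using pmf_map_add_pair_pmf[OF row insert.IH] insert.hyps by simp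
qed

definition branch_received :: "nat \<Rightarrow> (nat \<Rightarrow> bool) \<Rightarrow> nat set" where
  "branch_received K v = {j \<in> {1..K}. \<forall>l\<in>{j..K}. v l}"

lemma branch_received_Suc:
  "branch_received (Suc K) v = (if v (Suc K) then insert (Suc K) (branch_received K v) else {})"
  by (auto simp: branch_received_def le_Suc_eq)

lemma finite_branch_received [simp]: "finite (branch_received K v)"
  by (simp add: branch_received_def)

lemma card_branch_received_Suc_fun_upd:
  "card (branch_received (Suc K) (v(Suc K := b)))
     = (if b then Suc (card (branch_received K v)) else 0)"
proof -
  have "branch_received K (v(Suc K := c)) = branch_received K v" for c
    by (auto simp: branch_received_def)
  moreover have "Suc K \<notin> branch_received K v"
    by (simp add: branch_received_def)
  ultimately show ?thesis
    by (simp add: branch_received_Suc)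
qed

text \<open>Recursion obtained by conditioning on the link next to the fusion center.\<close>
primrec branch_pgf :: "nat \<Rightarrow> real \<Rightarrow> real poly" where
  "branch_pgf 0 p = 1"
| "branch_pgf (Suc K) p = [:1 - p:] + smult p (pCons 0 (branch_pgf K p))"

lemma pmf_card_branch_received:
  assumes "0 \<le> p" and "p \<le> 1"
  shows "pmf (map_pmf (\<lambda>v. card (branch_received K v)) (Pi_pmf {1..K} False (\<lambda>_. bernoulli_pmf p)))
           = coeff (branch_pgf K p)"
proof (induction K)
  case 0
  show ?case by (auto simp: branch_received_def pmf_return coeff_1 fun_eq_iff)
next
  case (Suc K)
  let ?P = "Pi_pmf {1..K} False (\<lambda>_. bernoulli_pmf p)"
  have "{1..Suc K} = insert (Suc K) {1..K}" by auto
  then have "map_pmf (\<lambda>v. card (branch_received (Suc K) v))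
        (Pi_pmf {1..Suc K} False (\<lambda>_. bernoulli_pmf p))
      = map_pmf (\<lambda>(b, v). if b then Suc (card (branch_received K v)) else 0)
          (pair_pmf (bernoulli_pmf p) ?P)"
    by (simp add: Pi_pmf_insert pmf.map_comp case_prod_unfold comp_def
        card_branch_received_Suc_fun_upd)
  also have "\<dots> = map_pmf (\<lambda>(b, n). if b then Suc n else 0)
      (pair_pmf (bernoulli_pmf p) (map_pmf (\<lambda>v. card (branch_received K v)) ?P))"
    unfolding pair_map_pmf2 pmf.map_comp by (rule map_pmf_cong) auto
  finally show ?case
    using pmf_map_Suc_if_bernoulli[OF Suc assms] by simp
qed

lemma card_ss_received:
  "card (ss_received R K w) = (\<Sum>r\<in>{1..R}. card (branch_received K (\<lambda>j. w (r, j))))"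
proof -
  have "ss_received R K w = (\<Union>r\<in>{1..R}. Pair r ` branch_received K (\<lambda>j. w (r, j)))"
    by (auto simp: ss_received_def ss_links_def branch_received_def)
  also have "card \<dots> = (\<Sum>r\<in>{1..R}. card (branch_received K (\<lambda>j. w (r, j))))"
    by (subst card_UN_disjoint) (auto simp: card_image inj_on_def)
  finally show ?thesis .
qed

lemma ss_numerator_eq:
  "[:1 - p:] + smult (p ^ (K + 1)) (monom 1 K * [:1, -1:]) = branch_pgf K p * [:1, -p:]"
proof (induction K)
  case 0
  show ?case by simp
next
  case (Suc K)
  have "poly ([:1 - p:] + smult (p ^ (Suc K + 1)) (monom 1 (Suc K) * [:1, -1:])) x
        = poly (branch_pgf (Suc K) p * [:1, -p:]) x" for x
  proof -
    have IH: "poly (branch_pgf K p) x * (1 - p * x) = 1 - p + p ^ (K + 1) * x ^ K * (1 - x)"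
      using arg_cong[OF Suc, of "\<lambda>q. poly q x"] by (simp add: poly_monom algebra_simps)
    have "poly (branch_pgf (Suc K) p * [:1, -p:]) x
        = (1 - p) * (1 - p * x) + p * x * (poly (branch_pgf K p) x * (1 - p * x))"
      by (simp add: algebra_simps)
    also have "\<dots> = 1 - p + p ^ (Suc K + 1) * x ^ Suc K * (1 - x)"
      unfolding IH by (simp add: algebra_simps)
    finally show ?thesis
      by (simp add: poly_monom algebra_simps)
  qed
  then show ?case
    by (simp add: poly_eq_poly_eq_iff[symmetric] fun_eq_iff)
qed

lemma ss_h_eq_branch_pgf_power: "ss_h R K p = branch_pgf K p ^ R"
  unfolding ss_h_def ss_numerator_eq power_mult_distrib by simp

theorem lemma4:
  fixes R K :: nat and p :: real
  assumes "R > 0" and "K > 0" and "0 \<le> p" and "p \<le> 1"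
  shows "\<forall>i \<le> R * K.
           measure_pmf.prob (ss_channel R K p) {w. card (ss_received R K w) = i}
             = coeff (ss_h R K p) i"
proof (intro allI impI)
  fix i
  have "measure_pmf.prob (ss_channel R K p) {w. card (ss_received R K w) = i}
      = pmf (map_pmf (\<lambda>w. \<Sum>r\<in>{1..R}. card (branch_received K (\<lambda>j. w (r, j))))
               (Pi_pmf ({1..R} \<times> {1..K}) False (\<lambda>_. bernoulli_pmf p))) i"
    by (simp add: pmf_map vimage_def ss_channel_def ss_links_def card_ss_received)
  also have "\<dots> = coeff (branch_pgf K p ^ card {1..R}) i"
    by (subst pmf_sum_rows_Pi_pmf[OF _ _ pmf_card_branch_received[OF assms(3,4)]]) simp_all
  finally show "measure_pmf.prob (ss_channel R K p) {w. card (ss_received R K w) = i}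
      = coeff (ss_h R K p) i"
    by (simp add: ss_h_eq_branch_pgf_power)
qed

end
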